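(* Let $x_1,\ldots,x_n$ be independent random variables with common mean $\mu_x$ and $|x_i-\mu_x|\le C_x$ for a constant $C_x$. Let $s_n=\sum_{i=1}^n x_i$ and let $\hat s_n$ be computed by recursive summation: $\hat s_1=x_1$, $\hat s_k=(\hat s_{k-1}+x_k)(1+\delta_k)$ for $2\le k\le n$, with $E_n=\hat s_n-s_n$. Assume that $\delta_2,\ldots,\delta_n$ are independent random variables of mean zero with $|\delta_k|\le u$, where $0<u<1$, and that $(\delta_2,\ldots,\delta_n)$ is independent of $(x_1,\ldots,x_n)$. Then for any $\delta\in(0,1)$, with probability at least $1-\delta$, \[ |E_n|\le \bigl(1+\tilde\gamma_n(\delta/3)\bigr)\bigl(\lambda|\mu_x|n^{3/2}+\lambda^2C_x n\bigr)u, \] where $\lambda=\lambda(\delta/3)=\sqrt{2\log(6/\delta)}$.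
   Context: For $\delta\in(0,1)$, $\lambda(\delta)=\sqrt{2\log(2/\delta)}$ and $\tilde\gamma_n(\delta)=\exp\!\left(\frac{\lambda(\delta)\sqrt{n}\,u+nu^2}{1-u}\right)-1$. The recurrence models recursive summation in floating-point arithmetic with unit roundoff $u$; $\delta_k$ is the relative rounding error at step $k$. *)

theory Defs
  imports "HOL-Probability.Probability"
begin

definition lam :: "real \<Rightarrow> real" where
  "lam \<delta> = sqrt (2 * ln (2 / \<delta>))"

definition gamma_tilde :: "real \<Rightarrow> nat \<Rightarrow> real \<Rightarrow> real" where
  "gamma_tilde u n \<delta> =
     exp ((lam \<delta> * sqrt (real n) * u + real n * u^2) / (1 - u)) - 1"

text \<open>Recursive summation (indices start at 1):
  rsum xs ds 1 = xs 1,  rsum xs ds k = (rsum xs ds (k-1) + xs k) * (1 + ds k) for k >= 2.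
  The value at 0 is an unused convention (empty sum).\<close>
fun rsum :: "(nat \<Rightarrow> real) \<Rightarrow> (nat \<Rightarrow> real) \<Rightarrow> nat \<Rightarrow> real" where
  "rsum xs ds 0 = 0"
| "rsum xs ds (Suc 0) = xs 1"
| "rsum xs ds (Suc (Suc k)) =
     (rsum xs ds (Suc k) + xs (Suc (Suc k))) * (1 + ds (Suc (Suc k)))"

end

theory Submission
  imports Defs
begin

(*
  Write s_k for the exact partial sums. Unrolling the recursion gives
    E_n = sum_{k=2..n} s_k delta_k prod_{k<j<=n} (1 + delta_j).
  With lambda = lambda(delta/3) three exceptional events are excluded, each by a Chernoff bound.
  A maximal Hoeffding inequality for the suffix sums of the delta_j (probability delta/6) bounds
  every product by exp(lambda sqrt(n) u) <= 1 + gamma_n(delta/3). The same inequality for the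
  prefix sums of x_i - mu (probability delta/3) gives |s_k| <= n |mu| + lambda C sqrt n.
  Finally, conditionally on x the coefficient of delta_k depends only on the delta_j with j > k,
  so E_n is a sum of reverse martingale differences and Azuma's inequality applies
  (probability delta/3), after truncating the products at 1 + gamma_n(delta/3) to make the
  coefficients bounded. Outside these events |E_n| <= lambda u (1 + gamma_n) sqrt(sum_k s_k^2),
  which is the claimed bound.
*)

section \<open>Independent random vectors\<close>

lemma (in prob_space) nn_integral_indep_var:
  assumes ind: "indep_var S A T B" and h: "h \<in> borel_measurable (S \<Otimes>\<^sub>M T)"
  shows "(\<integral>\<^sup>+\<omega>. h (A \<omega>, B \<omega>) \<partial>M) = (\<integral>\<^sup>+b. (\<integral>\<^sup>+\<omega>. h (A \<omega>, b) \<partial>M) \<partial>distr M T B)"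
proof -
  have A: "random_variable S A" and B: "random_variable T B"
    using ind by (auto dest: indep_var_rv1 indep_var_rv2)
  have law: "distr M S A \<Otimes>\<^sub>M distr M T B = distr M (S \<Otimes>\<^sub>M T) (\<lambda>\<omega>. (A \<omega>, B \<omega>))"
    using ind indep_var_distribution_eq by blast
  interpret SA: prob_space "distr M S A" using A by (rule prob_space_distr)
  interpret TB: prob_space "distr M T B" using B by (rule prob_space_distr)
  interpret pair_prob_space "distr M S A" "distr M T B" ..
  have "(\<integral>\<^sup>+\<omega>. h (A \<omega>, B \<omega>) \<partial>M) = integral\<^sup>N (distr M S A \<Otimes>\<^sub>M distr M T B) h"
    using A B h by (simp add: law nn_integral_distr measurable_Pair)
  also have "\<dots> = (\<integral>\<^sup>+b. \<integral>\<^sup>+a. h (a, b) \<partial>distr M S A \<partial>distr M T B)"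
    using h by (intro nn_integral_snd[symmetric]) (simp add: law)
  also have "\<dots> = (\<integral>\<^sup>+b. (\<integral>\<^sup>+\<omega>. h (A \<omega>, b) \<partial>M) \<partial>distr M T B)"
    using A h by (intro nn_integral_cong) (simp add: nn_integral_distr measurable_Pair1')
  finally show ?thesis .
qed

lemma (in prob_space) indep_var_pair_event:
  assumes "indep_var S A T B" and "H \<in> sets (S \<Otimes>\<^sub>M T)"
  shows "{\<omega>\<in>space M. (A \<omega>, B \<omega>) \<in> H} \<in> events"
proof -
  have "random_variable S A" and "random_variable T B"
    using assms(1) by (auto dest: indep_var_rv1 indep_var_rv2)
  with assms(2) show ?thesis by measurable
qed

lemma (in prob_space) emeasure_indep_var:
  assumes ind: "indep_var S A T B" and H: "H \<in> sets (S \<Otimes>\<^sub>M T)"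
  shows "emeasure M {\<omega>\<in>space M. (A \<omega>, B \<omega>) \<in> H}
           = (\<integral>\<^sup>+b. emeasure M {\<omega>\<in>space M. (A \<omega>, b) \<in> H} \<partial>distr M T B)"
proof -
  have A: "random_variable S A"
    using ind by (rule indep_var_rv1)
  have "emeasure M {\<omega>\<in>space M. (A \<omega>, B \<omega>) \<in> H} = (\<integral>\<^sup>+\<omega>. indicator H (A \<omega>, B \<omega>) \<partial>M)"
    using indep_var_pair_event[OF ind H]
    by (simp add: nn_integral_indicator[symmetric] indicator_def cong: nn_integral_cong)
  also have "\<dots> = (\<integral>\<^sup>+b. (\<integral>\<^sup>+\<omega>. indicator H (A \<omega>, b) \<partial>M) \<partial>distr M T B)"
    using ind H by (intro nn_integral_indep_var) auto
  also have "\<dots> = (\<integral>\<^sup>+b. emeasure M {\<omega>\<in>space M. (A \<omega>, b) \<in> H} \<partial>distr M T B)"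
  proof (intro nn_integral_cong)
    fix b assume "b \<in> space (distr M T B)"
    then have "{\<omega>\<in>space M. (A \<omega>, b) \<in> H} \<in> sets M"
      using A H by simp measurable
    then show "(\<integral>\<^sup>+\<omega>. indicator H (A \<omega>, b) \<partial>M) = emeasure M {\<omega>\<in>space M. (A \<omega>, b) \<in> H}"
      by (simp add: nn_integral_indicator[symmetric] indicator_def cong: nn_integral_cong)
  qed
  finally show ?thesis .
qed

lemma (in prob_space) emeasure_indep_var_le:
  assumes ind: "indep_var S A T B" and H: "H \<in> sets (S \<Otimes>\<^sub>M T)"
    and sections: "\<And>b. b \<in> space T \<Longrightarrow> emeasure M {\<omega>\<in>space M. (A \<omega>, b) \<in> H} \<le> c"
  shows "emeasure M {\<omega>\<in>space M. (A \<omega>, B \<omega>) \<in> H} \<le> c"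
proof -
  interpret TB: prob_space "distr M T B"
    using indep_var_rv2[OF ind] by (rule prob_space_distr)
  have "emeasure M {\<omega>\<in>space M. (A \<omega>, B \<omega>) \<in> H}
      = (\<integral>\<^sup>+b. emeasure M {\<omega>\<in>space M. (A \<omega>, b) \<in> H} \<partial>distr M T B)"
    using ind H by (rule emeasure_indep_var)
  also have "\<dots> \<le> (\<integral>\<^sup>+b. c \<partial>distr M T B)"
    using sections by (intro nn_integral_mono) simp
  also have "\<dots> = c"
    using TB.emeasure_space_1 by simp
  finally show ?thesis .
qed

section \<open>Maximal Hoeffding and Azuma inequalities\<close>

lemma (in prob_space) Hoeffdings_lemma_abs_le:
  assumes Z: "Z \<in> borel_measurable M" and E: "expectation Z = 0"
    and bound: "\<And>\<omega>. \<omega> \<in> space M \<Longrightarrow> \<bar>Z \<omega>\<bar> \<le> u"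
  shows "(\<integral>\<^sup>+\<omega>. ennreal (exp (\<theta> * Z \<omega>)) \<partial>M) \<le> ennreal (exp (\<theta>\<^sup>2 * u\<^sup>2 / 2))"
proof -
  have width: "\<theta>\<^sup>2 * (u - - u)\<^sup>2 / 8 = \<theta>\<^sup>2 * u\<^sup>2 / 2"
    by (simp add: power2_eq_square field_simps)
  have "AE \<omega> in M. Z \<omega> \<in> {-u..u}" "AE \<omega> in M. - Z \<omega> \<in> {-u..u}"
    using bound by (auto intro!: AE_I2 simp: abs_le_iff minus_le_iff)
  then interpret pos: interval_bounded_random_variable M Z "-u" u
      + neg: interval_bounded_random_variable M "\<lambda>\<omega>. - Z \<omega>" "-u" u
    using Z by unfold_locales simp_all
  consider "\<theta> > 0" | "\<theta> = 0" | "\<theta> < 0" by linarith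
  then show ?thesis
  proof cases
    case 1
    show ?thesis using pos.Hoeffdings_lemma_nn_integral_0[OF 1 E] unfolding width .
  next
    case 2
    then show ?thesis by (simp add: emeasure_space_1)
  next
    case 3
    then have "- \<theta> > 0" by simp
    from neg.Hoeffdings_lemma_nn_integral_0[OF this] show ?thesis
      using E unfolding width by simp
  qed
qed

lemma (in prob_space) emeasure_indep_var_le_exp_moment:
  assumes ind: "indep_var S A T B" and H: "H \<in> sets (S \<Otimes>\<^sub>M T)"
    and f: "f \<in> borel_measurable T" and E: "expectation (\<lambda>\<omega>. f (B \<omega>)) = 0"
    and bound: "\<And>\<omega>. \<omega> \<in> space M \<Longrightarrow> \<bar>f (B \<omega>)\<bar> \<le> c" and K: "0 \<le> K"
    and sections: "\<And>b. b \<in> space T \<Longrightarrow>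
      emeasure M {\<omega>\<in>space M. (A \<omega>, b) \<in> H} \<le> ennreal (K * exp (\<theta> * f b))"
  shows "emeasure M {\<omega>\<in>space M. (A \<omega>, B \<omega>) \<in> H} \<le> ennreal (K * exp (\<theta>\<^sup>2 * c\<^sup>2 / 2))"
proof -
  have B: "random_variable T B"
    using ind by (rule indep_var_rv2)
  have "emeasure M {\<omega>\<in>space M. (A \<omega>, B \<omega>) \<in> H}
      = (\<integral>\<^sup>+b. emeasure M {\<omega>\<in>space M. (A \<omega>, b) \<in> H} \<partial>distr M T B)"
    using ind H by (rule emeasure_indep_var)
  also have "\<dots> \<le> (\<integral>\<^sup>+b. ennreal K * ennreal (exp (\<theta> * f b)) \<partial>distr M T B)"
    using sections K by (intro nn_integral_mono) (simp add: ennreal_mult)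
  also have "\<dots> = ennreal K * (\<integral>\<^sup>+\<omega>. ennreal (exp (\<theta> * f (B \<omega>))) \<partial>M)"
    using B f by (simp add: nn_integral_distr nn_integral_cmult)
  also have "\<dots> \<le> ennreal K * ennreal (exp (\<theta>\<^sup>2 * c\<^sup>2 / 2))"
    using B f E bound by (intro mult_left_mono Hoeffdings_lemma_abs_le) auto
  finally show ?thesis
    using K by (simp add: ennreal_mult)
qed

lemma (in prob_space) nn_integral_exp_indep_var_le:
  assumes ind: "indep_var S A T B"
    and f: "f \<in> borel_measurable S" and E: "expectation (\<lambda>\<omega>. f (A \<omega>)) = 0"
    and bound: "\<And>\<omega>. \<omega> \<in> space M \<Longrightarrow> \<bar>f (A \<omega>)\<bar> \<le> u"
    and g: "g \<in> borel_measurable T" and g_bound: "\<And>y. \<bar>g y\<bar> \<le> b"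
    and F: "F \<in> borel_measurable T"
  shows "(\<integral>\<^sup>+\<omega>. ennreal (exp (\<theta> * (f (A \<omega>) * g (B \<omega>) + F (B \<omega>)))) \<partial>M)
           \<le> ennreal (exp (\<theta>\<^sup>2 * u\<^sup>2 * b\<^sup>2 / 2)) * (\<integral>\<^sup>+\<omega>. ennreal (exp (\<theta> * F (B \<omega>))) \<partial>M)"
proof -
  have A: "random_variable S A" and B: "random_variable T B"
    using ind by (auto dest: indep_var_rv1 indep_var_rv2)
  let ?C = "ennreal (exp (\<theta>\<^sup>2 * u\<^sup>2 * b\<^sup>2 / 2))"
  have inner: "(\<integral>\<^sup>+\<omega>. ennreal (exp (\<theta> * (f (A \<omega>) * g y + F y))) \<partial>M)
      \<le> ?C * ennreal (exp (\<theta> * F y))" for y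
  proof -
    have "(\<integral>\<^sup>+\<omega>. ennreal (exp (\<theta> * (f (A \<omega>) * g y + F y))) \<partial>M)
        = ennreal (exp (\<theta> * F y)) * (\<integral>\<^sup>+\<omega>. ennreal (exp ((\<theta> * g y) * f (A \<omega>))) \<partial>M)"
      using A f by (simp add: nn_integral_cmult[symmetric] ennreal_mult[symmetric] exp_add[symmetric]
          algebra_simps)
    also have "\<dots> \<le> ennreal (exp (\<theta> * F y)) * ennreal (exp ((\<theta> * g y)\<^sup>2 * u\<^sup>2 / 2))"
      using A f E bound by (intro mult_left_mono Hoeffdings_lemma_abs_le) auto
    also have "\<dots> \<le> ennreal (exp (\<theta> * F y)) * ?C"
    proof -
      have "(g y)\<^sup>2 \<le> b\<^sup>2"
        using g_bound[of y] by (metis abs_ge_zero power2_abs power_mono)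
      then have "(\<theta> * g y)\<^sup>2 * u\<^sup>2 \<le> \<theta>\<^sup>2 * u\<^sup>2 * b\<^sup>2"
        by (simp add: power_mult_distrib mult_left_mono mult_right_mono mult.assoc mult.commute[of "u\<^sup>2"])
      then show ?thesis by (intro mult_left_mono ennreal_leI) auto
    qed
    finally show ?thesis by (simp add: mult.commute)
  qed
  have "(\<lambda>(a, y). ennreal (exp (\<theta> * (f a * g y + F y)))) \<in> borel_measurable (S \<Otimes>\<^sub>M T)"
    using f g F by measurable
  from nn_integral_indep_var[OF ind this]
  have "(\<integral>\<^sup>+\<omega>. ennreal (exp (\<theta> * (f (A \<omega>) * g (B \<omega>) + F (B \<omega>)))) \<partial>M)
      = (\<integral>\<^sup>+y. (\<integral>\<^sup>+\<omega>. ennreal (exp (\<theta> * (f (A \<omega>) * g y + F y))) \<partial>M) \<partial>distr M T B)"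
    by simp
  also have "\<dots> \<le> (\<integral>\<^sup>+y. ?C * ennreal (exp (\<theta> * F y)) \<partial>distr M T B)"
    by (intro nn_integral_mono inner)
  also have "\<dots> = ?C * (\<integral>\<^sup>+\<omega>. ennreal (exp (\<theta> * F (B \<omega>))) \<partial>M)"
    using B F by (simp add: nn_integral_distr nn_integral_cmult)
  finally show ?thesis .
qed

lemma borel_measurable_PiM_component [measurable]:
  "(\<lambda>y. y j) \<in> borel_measurable (PiM J (\<lambda>_. borel :: 'b::topological_space measure))"
proof (cases "j \<in> J")
  case False
  have "(\<lambda>y. y j) \<in> borel_measurable (PiM J (\<lambda>_. borel :: 'b measure))
      \<longleftrightarrow> (\<lambda>y. undefined :: 'b) \<in> borel_measurable (PiM J (\<lambda>_. borel :: 'b measure))"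
    using False by (intro measurable_cong) (auto simp: space_PiM PiE_def extensional_def)
  then show ?thesis by simp
qed measurable

lemma upper_sum_remove_top:
  fixes f :: "'i \<Rightarrow> real" and r :: "'i \<Rightarrow> nat"
  assumes "finite I" "i \<in> I" "\<And>j. j \<in> I \<Longrightarrow> r j \<le> r i"
    and "0 < t" "t \<le> (\<Sum>j\<in>{j\<in>I. k \<le> r j}. f j)"
  shows "t - f i \<le> (\<Sum>j\<in>{j\<in>I - {i}. k \<le> r j}. f j)"
proof (cases "k \<le> r i")
  case True
  then have "{j\<in>I. k \<le> r j} = insert i {j\<in>I - {i}. k \<le> r j}"
    using assms(2) by auto
  with assms show ?thesis by simp
next
  case False
  then have "{j\<in>I. k \<le> r j} = {}"
    using assms(3) le_trans by blast
  with assms show ?thesis by simp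
qed

lemma (in prob_space) emeasure_upper_sum_ge_remove_top:
  fixes X :: "'i \<Rightarrow> 'a \<Rightarrow> real" and r :: "'i \<Rightarrow> nat"
  assumes fin: "finite I" and ind: "indep_vars (\<lambda>_. borel) X I"
    and i: "i \<in> I" and top: "\<And>j. j \<in> I \<Longrightarrow> r j \<le> r i"
    and E: "expectation (X i) = 0" and bound: "\<And>\<omega>. \<omega> \<in> space M \<Longrightarrow> \<bar>X i \<omega>\<bar> \<le> c"
    and t: "0 < t" and K: "0 \<le> K"
    and rest: "\<And>s. emeasure M {\<omega>\<in>space M. \<exists>k. s \<le> (\<Sum>j\<in>{j\<in>I - {i}. k \<le> r j}. X j \<omega>)}
                   \<le> ennreal (exp (- \<theta> * s) * K)"
  shows "emeasure M {\<omega>\<in>space M. \<exists>k. t \<le> (\<Sum>j\<in>{j\<in>I. k \<le> r j}. X j \<omega>)}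
           \<le> ennreal (exp (- \<theta> * t) * K * exp (\<theta>\<^sup>2 * c\<^sup>2 / 2))"
proof -
  let ?A = "\<lambda>\<omega>. restrict (\<lambda>j. X j \<omega>) (I - {i})" and ?B = "\<lambda>\<omega>. restrict (\<lambda>j. X j \<omega>) {i}"
  let ?S = "PiM (I - {i}) (\<lambda>_. borel) :: ('i \<Rightarrow> real) measure"
    and ?T = "PiM {i} (\<lambda>_. borel) :: ('i \<Rightarrow> real) measure"
  define H where
    "H = {p\<in>space (?S \<Otimes>\<^sub>M ?T). \<exists>k. t \<le> (\<Sum>j\<in>{j\<in>I - {i}. k \<le> r j}. fst p j) + snd p i}"
  have AB: "indep_var ?S ?A ?T ?B"
    using ind i by (intro indep_var_restrict) auto
  have H: "H \<in> sets (?S \<Otimes>\<^sub>M ?T)"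
    unfolding H_def by measurable
  have "emeasure M {\<omega>\<in>space M. \<exists>k. t \<le> (\<Sum>j\<in>{j\<in>I. k \<le> r j}. X j \<omega>)}
      \<le> emeasure M {\<omega>\<in>space M. (?A \<omega>, ?B \<omega>) \<in> H}"
  proof (rule emeasure_mono)
    show "{\<omega>\<in>space M. (?A \<omega>, ?B \<omega>) \<in> H} \<in> sets M"
      using AB H by (rule indep_var_pair_event)
    show "{\<omega>\<in>space M. \<exists>k. t \<le> (\<Sum>j\<in>{j\<in>I. k \<le> r j}. X j \<omega>)} \<subseteq> {\<omega>\<in>space M. (?A \<omega>, ?B \<omega>) \<in> H}"
      using upper_sum_remove_top[where r = r, OF fin i top t]
      by (auto simp: H_def space_pair_measure space_PiM diff_le_eq)
  qed
  also have "\<dots> \<le> ennreal (exp (- \<theta> * t) * K * exp (\<theta>\<^sup>2 * c\<^sup>2 / 2))"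
  proof (rule emeasure_indep_var_le_exp_moment[OF AB H])
    fix b assume b: "b \<in> space ?T"
    have "{\<omega>\<in>space M. (?A \<omega>, b) \<in> H}
        = {\<omega>\<in>space M. \<exists>k. t - b i \<le> (\<Sum>j\<in>{j\<in>I - {i}. k \<le> r j}. X j \<omega>)}"
      using b by (auto simp: H_def space_pair_measure space_PiM diff_le_eq)
    also have "emeasure M \<dots> \<le> ennreal (exp (- \<theta> * (t - b i)) * K)"
      by (rule rest)
    also have "exp (- \<theta> * (t - b i)) * K = exp (- \<theta> * t) * K * exp (\<theta> * b i)"
      by (simp add: algebra_simps flip: exp_add)
    finally show "emeasure M {\<omega>\<in>space M. (?A \<omega>, b) \<in> H} \<le> ennreal (\<dots>)" .
  qed (use bound E i K in auto)
  finally show ?thesis .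
qed

lemma (in prob_space) Hoeffding_maximal_ineq_exp:
  fixes X :: "'i \<Rightarrow> 'a \<Rightarrow> real" and r :: "'i \<Rightarrow> nat" and c :: "'i \<Rightarrow> real"
  assumes "finite I" and "indep_vars (\<lambda>_. borel) X I"
    and "\<And>i. i \<in> I \<Longrightarrow> expectation (X i) = 0"
    and "\<And>i \<omega>. i \<in> I \<Longrightarrow> \<omega> \<in> space M \<Longrightarrow> \<bar>X i \<omega>\<bar> \<le> c i" and "0 \<le> \<theta>"
  shows "emeasure M {\<omega>\<in>space M. \<exists>k. t \<le> (\<Sum>j\<in>{j\<in>I. k \<le> r j}. X j \<omega>)}
           \<le> ennreal (exp (- \<theta> * t) * exp (\<theta>\<^sup>2 * (\<Sum>i\<in>I. (c i)\<^sup>2) / 2))"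
  using assms
proof (induction "card I" arbitrary: I t rule: less_induct)
  case less
  note fin = less.prems(1) and ind = less.prems(2) and E = less.prems(3)
    and bound = less.prems(4) and \<theta> = less.prems(5)
  consider "t \<le> 0" | "0 < t" "I = {}" | "0 < t" "I \<noteq> {}" by linarith
  then show ?case
  proof cases
    case 1
    have "0 \<le> - \<theta> * t + \<theta>\<^sup>2 * (\<Sum>i\<in>I. (c i)\<^sup>2) / 2"
      using 1 \<theta> by (intro add_nonneg_nonneg) (auto simp: mult_nonneg_nonpos sum_nonneg)
    then have "ennreal 1 \<le> ennreal (exp (- \<theta> * t) * exp (\<theta>\<^sup>2 * (\<Sum>i\<in>I. (c i)\<^sup>2) / 2))"
      by (intro ennreal_leI) (simp flip: exp_add)
    then show ?thesis
      by (intro order_trans[OF emeasure_le_1]) simp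
  next
    case 2
    then show ?thesis by simp
  next
    case 3
    have "Max (r ` I) \<in> r ` I"
      using fin 3(2) by (intro Max_in) auto
    then obtain i where i: "i \<in> I" "r i = Max (r ` I)"
      by auto
    have "emeasure M {\<omega>\<in>space M. \<exists>k. t \<le> (\<Sum>j\<in>{j\<in>I. k \<le> r j}. X j \<omega>)}
        \<le> ennreal (exp (- \<theta> * t) * exp (\<theta>\<^sup>2 * (\<Sum>i\<in>I - {i}. (c i)\<^sup>2) / 2) * exp (\<theta>\<^sup>2 * (c i)\<^sup>2 / 2))"
    proof (rule emeasure_upper_sum_ge_remove_top[OF fin ind i(1) _ E[OF i(1)] bound[OF i(1)] 3(1)])
      show "r j \<le> r i" if "j \<in> I" for j
        using fin that i(2) by simp
      show "emeasure M {\<omega>\<in>space M. \<exists>k. s \<le> (\<Sum>j\<in>{j\<in>I - {i}. k \<le> r j}. X j \<omega>)}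
          \<le> ennreal (exp (- \<theta> * s) * exp (\<theta>\<^sup>2 * (\<Sum>i\<in>I - {i}. (c i)\<^sup>2) / 2))" for s
        using fin ind E bound \<theta> i(1)
        by (intro less.hyps card_Diff1_less indep_vars_subset[OF ind]) auto
    qed simp_all
    also have "\<dots> = ennreal (exp (- \<theta> * t) * exp (\<theta>\<^sup>2 * (\<Sum>i\<in>I. (c i)\<^sup>2) / 2))"
      using fin i(1) by (simp add: sum.remove algebra_simps flip: exp_add)
    finally show ?thesis .
  qed
qed

lemma (in prob_space) Hoeffding_maximal_ineq:
  fixes X :: "'i \<Rightarrow> 'a \<Rightarrow> real" and r :: "'i \<Rightarrow> nat" and c :: "'i \<Rightarrow> real"
  assumes "finite I" and "indep_vars (\<lambda>_. borel) X I"
    and "\<And>i. i \<in> I \<Longrightarrow> expectation (X i) = 0"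
    and "\<And>i \<omega>. i \<in> I \<Longrightarrow> \<omega> \<in> space M \<Longrightarrow> \<bar>X i \<omega>\<bar> \<le> c i"
    and "0 \<le> t" and V: "0 < (\<Sum>i\<in>I. (c i)\<^sup>2)"
  shows "prob {\<omega>\<in>space M. \<exists>k. t \<le> (\<Sum>j\<in>{j\<in>I. k \<le> r j}. X j \<omega>)}
           \<le> exp (- t\<^sup>2 / (2 * (\<Sum>i\<in>I. (c i)\<^sup>2)))"
proof -
  let ?V = "\<Sum>i\<in>I. (c i)\<^sup>2"
  have "- (t / ?V) * t + (t / ?V)\<^sup>2 * ?V / 2 = - t\<^sup>2 / (2 * ?V)"
    using V by (simp add: power2_eq_square field_simps)
  moreover have "emeasure M {\<omega>\<in>space M. \<exists>k. t \<le> (\<Sum>j\<in>{j\<in>I. k \<le> r j}. X j \<omega>)}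
      \<le> ennreal (exp (- (t / ?V) * t) * exp ((t / ?V)\<^sup>2 * ?V / 2))"
    using assms by (intro Hoeffding_maximal_ineq_exp) auto
  ultimately show ?thesis
    by (simp add: emeasure_eq_measure flip: exp_add)
qed

lemma sets_Collect_Ex_upper_sum_ge:
  fixes X :: "'i \<Rightarrow> 'a \<Rightarrow> real" and r :: "'i \<Rightarrow> nat"
  assumes "\<And>i. i \<in> I \<Longrightarrow> X i \<in> borel_measurable M"
  shows "{\<omega>\<in>space M. \<exists>k. t \<le> (\<Sum>j\<in>{j\<in>I. k \<le> r j}. X j \<omega>)} \<in> sets M"
proof -
  have "(\<lambda>\<omega>. \<Sum>j\<in>{j\<in>I. k \<le> r j}. X j \<omega>) \<in> borel_measurable M" for k
    using assms by (intro borel_measurable_sum) auto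
  then show ?thesis by measurable
qed

(* Since g k only reads the coordinates after k, the coefficient of the smallest index is a
   function of the other coordinates, and these are independent of X i. *)
lemma (in prob_space) Azuma_exp_moment_remove_min:
  fixes X :: "'i::linorder \<Rightarrow> 'a \<Rightarrow> real" and g :: "'i \<Rightarrow> ('i \<Rightarrow> real) \<Rightarrow> real"
  assumes fin: "finite I" and ind: "indep_vars (\<lambda>_. borel) X I"
    and i: "i \<in> I" and min: "\<And>j. j \<in> I \<Longrightarrow> i \<le> j"
    and E: "expectation (X i) = 0" and bound: "\<And>\<omega>. \<omega> \<in> space M \<Longrightarrow> \<bar>X i \<omega>\<bar> \<le> u"
    and g_bound: "\<And>y. \<bar>g i y\<bar> \<le> b"
    and g_future: "\<And>k y y'. (\<And>j. k < j \<Longrightarrow> y j = y' j) \<Longrightarrow> g k y = g k y'"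
    and g: "\<And>k J. g k \<in> borel_measurable (PiM J (\<lambda>_. borel))"
  shows "(\<integral>\<^sup>+\<omega>. ennreal (exp (\<theta> * (\<Sum>k\<in>I. X k \<omega> * g k (restrict (\<lambda>j. X j \<omega>) I)))) \<partial>M)
     \<le> ennreal (exp (\<theta>\<^sup>2 * u\<^sup>2 * b\<^sup>2 / 2))
       * (\<integral>\<^sup>+\<omega>. ennreal (exp (\<theta> * (\<Sum>k\<in>I - {i}. X k \<omega> * g k (restrict (\<lambda>j. X j \<omega>) (I - {i}))))) \<partial>M)"
proof -
  define F where "F y = (\<Sum>k\<in>I - {i}. y k * g k y)" for y
  let ?A = "\<lambda>\<omega>. restrict (\<lambda>j. X j \<omega>) {i}" and ?B = "\<lambda>\<omega>. restrict (\<lambda>j. X j \<omega>) (I - {i})"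
  have F_B: "F (?B \<omega>) = (\<Sum>k\<in>I - {i}. X k \<omega> * g k (?B \<omega>))" for \<omega>
    unfolding F_def by (intro sum.cong) auto
  have split: "(\<Sum>k\<in>I. X k \<omega> * g k (restrict (\<lambda>j. X j \<omega>) I)) = ?A \<omega> i * g i (?B \<omega>) + F (?B \<omega>)" for \<omega>
  proof -
    have "g k (restrict (\<lambda>j. X j \<omega>) I) = g k (?B \<omega>)" if "k \<in> I" for k
      using min[OF that] by (intro g_future) auto
    then have "(\<Sum>k\<in>I. X k \<omega> * g k (restrict (\<lambda>j. X j \<omega>) I)) = (\<Sum>k\<in>I. X k \<omega> * g k (?B \<omega>))"
      by (intro sum.cong) auto
    then show ?thesis
      using fin i by (simp add: sum.remove[of I i] F_B)
  qed
  have "(\<integral>\<^sup>+\<omega>. ennreal (exp (\<theta> * (\<Sum>k\<in>I. X k \<omega> * g k (restrict (\<lambda>j. X j \<omega>) I)))) \<partial>M)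
      = (\<integral>\<^sup>+\<omega>. ennreal (exp (\<theta> * (?A \<omega> i * g i (?B \<omega>) + F (?B \<omega>)))) \<partial>M)"
    by (simp only: split)
  also have "\<dots> \<le> ennreal (exp (\<theta>\<^sup>2 * u\<^sup>2 * b\<^sup>2 / 2)) * (\<integral>\<^sup>+\<omega>. ennreal (exp (\<theta> * F (?B \<omega>))) \<partial>M)"
  proof (rule nn_integral_exp_indep_var_le[where f = "\<lambda>a. a i" and g = "g i" and A = ?A and B = ?B])
    show "indep_var (PiM {i} (\<lambda>_. borel)) ?A (PiM (I - {i}) (\<lambda>_. borel)) ?B"
      using ind i by (intro indep_var_restrict) auto
    show "F \<in> borel_measurable (PiM (I - {i}) (\<lambda>_. borel))"
      unfolding F_def using g by measurable
    show "(\<lambda>a. a i) \<in> borel_measurable (PiM {i} (\<lambda>_. borel))"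
      by measurable
    show "expectation (\<lambda>\<omega>. ?A \<omega> i) = 0"
      using E by simp
    show "\<bar>?A \<omega> i\<bar> \<le> u" if "\<omega> \<in> space M" for \<omega>
      using bound that by simp
  qed (fact g g_bound)+
  finally show ?thesis
    by (simp only: F_B)
qed

lemma (in prob_space) Azuma_exp_moment:
  fixes X :: "'i::linorder \<Rightarrow> 'a \<Rightarrow> real" and g :: "'i \<Rightarrow> ('i \<Rightarrow> real) \<Rightarrow> real"
  assumes "finite I" and "indep_vars (\<lambda>_. borel) X I"
    and "\<And>i. i \<in> I \<Longrightarrow> expectation (X i) = 0"
    and "\<And>i \<omega>. i \<in> I \<Longrightarrow> \<omega> \<in> space M \<Longrightarrow> \<bar>X i \<omega>\<bar> \<le> u"
    and "\<And>k y. \<bar>g k y\<bar> \<le> b k"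
    and "\<And>k y y'. (\<And>j. k < j \<Longrightarrow> y j = y' j) \<Longrightarrow> g k y = g k y'"
    and "\<And>k J. g k \<in> borel_measurable (PiM J (\<lambda>_. borel))"
  shows "(\<integral>\<^sup>+\<omega>. ennreal (exp (\<theta> * (\<Sum>k\<in>I. X k \<omega> * g k (restrict (\<lambda>j. X j \<omega>) I)))) \<partial>M)
           \<le> ennreal (exp (\<theta>\<^sup>2 * u\<^sup>2 * (\<Sum>k\<in>I. (b k)\<^sup>2) / 2))"
  using assms
proof (induction "card I" arbitrary: I rule: less_induct)
  case less
  note fin = less.prems(1) and ind = less.prems(2) and E = less.prems(3)
    and bound = less.prems(4) and g_bound = less.prems(5) and g_future = less.prems(6)
    and g = less.prems(7)
  show ?case
  proof (cases "I = {}")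
    case True
    then show ?thesis by (simp add: emeasure_space_1)
  next
    case False
    define i where "i = Min I"
    have i: "i \<in> I" "\<And>j. j \<in> I \<Longrightarrow> i \<le> j"
      using fin False by (auto simp: i_def)
    have IH: "(\<integral>\<^sup>+\<omega>. ennreal (exp (\<theta> * (\<Sum>k\<in>I - {i}. X k \<omega> * g k (restrict (\<lambda>j. X j \<omega>) (I - {i}))))) \<partial>M)
        \<le> ennreal (exp (\<theta>\<^sup>2 * u\<^sup>2 * (\<Sum>k\<in>I - {i}. (b k)\<^sup>2) / 2))"
    proof (rule less.hyps[OF _ _ _ _ _ g_bound g_future g])
      show "card (I - {i}) < card I"
        using fin i(1) by (rule card_Diff1_less)
      show "indep_vars (\<lambda>_. borel) X (I - {i})"
        using ind by (rule indep_vars_subset) auto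
    qed (use fin E bound in auto)
    have "(\<integral>\<^sup>+\<omega>. ennreal (exp (\<theta> * (\<Sum>k\<in>I. X k \<omega> * g k (restrict (\<lambda>j. X j \<omega>) I)))) \<partial>M)
        \<le> ennreal (exp (\<theta>\<^sup>2 * u\<^sup>2 * (b i)\<^sup>2 / 2))
          * (\<integral>\<^sup>+\<omega>. ennreal (exp (\<theta> * (\<Sum>k\<in>I - {i}. X k \<omega> * g k (restrict (\<lambda>j. X j \<omega>) (I - {i}))))) \<partial>M)"
      using i by (intro Azuma_exp_moment_remove_min[OF fin ind _ _ E bound g_bound g_future g]) auto
    also have "\<dots> \<le> ennreal (exp (\<theta>\<^sup>2 * u\<^sup>2 * (b i)\<^sup>2 / 2)) * ennreal (exp (\<theta>\<^sup>2 * u\<^sup>2 * (\<Sum>k\<in>I - {i}. (b k)\<^sup>2) / 2))"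
      by (intro mult_left_mono IH) simp
    also have "\<dots> = ennreal (exp (\<theta>\<^sup>2 * u\<^sup>2 * (\<Sum>k\<in>I. (b k)\<^sup>2) / 2))"
      using fin i(1)
      by (simp add: sum.remove[of I i] algebra_simps add_divide_distrib flip: ennreal_mult exp_add)
    finally show ?thesis .
  qed
qed

lemma borel_measurable_sum_restrict:
  fixes X :: "'i \<Rightarrow> 'a \<Rightarrow> real" and g :: "'i \<Rightarrow> ('i \<Rightarrow> real) \<Rightarrow> real"
  assumes "\<And>i. i \<in> I \<Longrightarrow> X i \<in> borel_measurable M"
    and "\<And>k. g k \<in> borel_measurable (PiM I (\<lambda>_. borel))"
  shows "(\<lambda>\<omega>. \<Sum>k\<in>I. X k \<omega> * g k (restrict (\<lambda>j. X j \<omega>) I)) \<in> borel_measurable M"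
proof (intro borel_measurable_sum borel_measurable_times)
  have "(\<lambda>\<omega>. restrict (\<lambda>j. X j \<omega>) I) \<in> measurable M (PiM I (\<lambda>_. borel))"
    using assms(1) by (rule measurable_restrict)
  then show "(\<lambda>\<omega>. g k (restrict (\<lambda>j. X j \<omega>) I)) \<in> borel_measurable M" for k
    using assms(2) by (rule measurable_compose)
qed (use assms(1) in auto)

lemma (in prob_space) Azuma_ineq_ge:
  fixes X :: "'i::linorder \<Rightarrow> 'a \<Rightarrow> real" and g :: "'i \<Rightarrow> ('i \<Rightarrow> real) \<Rightarrow> real"
  assumes "finite I" and ind: "indep_vars (\<lambda>_. borel) X I"
    and "\<And>i. i \<in> I \<Longrightarrow> expectation (X i) = 0"
    and "\<And>i \<omega>. i \<in> I \<Longrightarrow> \<omega> \<in> space M \<Longrightarrow> \<bar>X i \<omega>\<bar> \<le> u"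
    and "\<And>k y. \<bar>g k y\<bar> \<le> b k"
    and "\<And>k y y'. (\<And>j. k < j \<Longrightarrow> y j = y' j) \<Longrightarrow> g k y = g k y'"
    and g: "\<And>k J. g k \<in> borel_measurable (PiM J (\<lambda>_. borel))"
    and u: "0 < u" and V: "0 < (\<Sum>k\<in>I. (b k)\<^sup>2)" and l: "0 \<le> l"
  shows "prob {\<omega>\<in>space M. l * u * sqrt (\<Sum>k\<in>I. (b k)\<^sup>2)
           \<le> (\<Sum>k\<in>I. X k \<omega> * g k (restrict (\<lambda>j. X j \<omega>) I))} \<le> exp (- l\<^sup>2 / 2)"
proof (cases "l = 0")
  case False
  define \<sigma> where "\<sigma> = u * sqrt (\<Sum>k\<in>I. (b k)\<^sup>2)"
  define \<theta> where "\<theta> = l / \<sigma>"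
  have \<sigma>: "0 < \<sigma>" using u V by (simp add: \<sigma>_def)
  have \<theta>: "0 < \<theta>" using \<sigma> l False by (simp add: \<theta>_def)
  let ?S = "\<lambda>\<omega>. \<Sum>k\<in>I. X k \<omega> * g k (restrict (\<lambda>j. X j \<omega>) I)"
  let ?t = "l * u * sqrt (\<Sum>k\<in>I. (b k)\<^sup>2)"
  have S: "?S \<in> borel_measurable M"
    using ind g by (intro borel_measurable_sum_restrict) (auto simp: indep_vars_def)
  have "ennreal (prob {\<omega>\<in>space M. ?t \<le> ?S \<omega>}) = emeasure M {\<omega>\<in>space M. ?t \<le> ?S \<omega>}"
    by (simp only: emeasure_eq_measure)
  also have "\<dots> \<le> ennreal (exp (- \<theta> * ?t)) * (\<integral>\<^sup>+\<omega>. ennreal (exp (\<theta> * ?S \<omega>)) * indicator (space M) \<omega> \<partial>M)"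
    using \<theta> S by (intro Chernoff_ineq_nn_integral_ge) auto
  also have "(\<integral>\<^sup>+\<omega>. ennreal (exp (\<theta> * ?S \<omega>)) * indicator (space M) \<omega> \<partial>M)
      = (\<integral>\<^sup>+\<omega>. ennreal (exp (\<theta> * ?S \<omega>)) \<partial>M)"
    by (intro nn_integral_cong) simp
  also have "ennreal (exp (- \<theta> * ?t)) * \<dots>
      \<le> ennreal (exp (- \<theta> * ?t)) * ennreal (exp (\<theta>\<^sup>2 * u\<^sup>2 * (\<Sum>k\<in>I. (b k)\<^sup>2) / 2))"
    by (intro mult_left_mono Azuma_exp_moment[OF assms(1-7)] zero_le)
  also have "\<dots> = ennreal (exp (- l\<^sup>2 / 2))"
  proof -
    have "\<theta> * \<sigma> = l"
      using \<sigma> by (simp add: \<theta>_def)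
    have "- \<theta> * ?t + \<theta>\<^sup>2 * u\<^sup>2 * (\<Sum>k\<in>I. (b k)\<^sup>2) / 2 = - l * (\<theta> * \<sigma>) + (\<theta> * \<sigma>)\<^sup>2 / 2"
      using V by (simp add: \<sigma>_def power_mult_distrib algebra_simps)
    also have "\<dots> = - l\<^sup>2 / 2"
      using \<open>\<theta> * \<sigma> = l\<close> by (simp add: power2_eq_square)
    finally show ?thesis
      by (simp flip: ennreal_mult exp_add)
  qed
  finally show ?thesis
    by (rule ennreal_le_iff[THEN iffD1, rotated]) simp
qed simp

lemma (in prob_space) Azuma_ineq_abs:
  fixes X :: "'i::linorder \<Rightarrow> 'a \<Rightarrow> real" and g :: "'i \<Rightarrow> ('i \<Rightarrow> real) \<Rightarrow> real"
  assumes "finite I" and ind: "indep_vars (\<lambda>_. borel) X I"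
    and "\<And>i. i \<in> I \<Longrightarrow> expectation (X i) = 0"
    and "\<And>i \<omega>. i \<in> I \<Longrightarrow> \<omega> \<in> space M \<Longrightarrow> \<bar>X i \<omega>\<bar> \<le> u"
    and g_bound: "\<And>k y. \<bar>g k y\<bar> \<le> b k"
    and g_future: "\<And>k y y'. (\<And>j. k < j \<Longrightarrow> y j = y' j) \<Longrightarrow> g k y = g k y'"
    and g: "\<And>k J. g k \<in> borel_measurable (PiM J (\<lambda>_. borel))"
    and u: "0 < u" and l: "0 \<le> l"
  shows "prob {\<omega>\<in>space M. l * u * sqrt (\<Sum>k\<in>I. (b k)\<^sup>2)
           < \<bar>\<Sum>k\<in>I. X k \<omega> * g k (restrict (\<lambda>j. X j \<omega>) I)\<bar>} \<le> 2 * exp (- l\<^sup>2 / 2)"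
proof (cases "(\<Sum>k\<in>I. (b k)\<^sup>2) = 0")
  case True
  have "g k y = 0" if "k \<in> I" for k y
    using True g_bound[of k y] that \<open>finite I\<close> by (simp add: sum_nonneg_eq_0_iff)
  with True show ?thesis by simp
next
  case False
  then have V: "0 < (\<Sum>k\<in>I. (b k)\<^sup>2)"
    by (simp add: order_less_le sum_nonneg)
  let ?t = "l * u * sqrt (\<Sum>k\<in>I. (b k)\<^sup>2)"
  let ?E = "\<lambda>g. {\<omega>\<in>space M. ?t \<le> (\<Sum>k\<in>I. X k \<omega> * g k (restrict (\<lambda>j. X j \<omega>) I))}"
  have E: "?E h \<in> events" if "\<And>k. h k \<in> borel_measurable (PiM I (\<lambda>_. borel))" for h
  proof -
    have "(\<lambda>\<omega>. \<Sum>k\<in>I. X k \<omega> * h k (restrict (\<lambda>j. X j \<omega>) I)) \<in> borel_measurable M"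
      using ind that by (intro borel_measurable_sum_restrict) (auto simp: indep_vars_def)
    then show ?thesis by measurable
  qed
  have E_pos: "?E g \<in> events"
    using g by (rule E)
  have E_neg: "?E (\<lambda>k y. - g k y) \<in> events"
    by (rule E) (use g in measurable)
  have neg_future: "- g k y = - g k y'" if "\<And>j. k < j \<Longrightarrow> y j = y' j" for k y y'
    using g_future[OF that] by simp
  have "prob {\<omega>\<in>space M. ?t < \<bar>\<Sum>k\<in>I. X k \<omega> * g k (restrict (\<lambda>j. X j \<omega>) I)\<bar>}
      \<le> prob (?E g \<union> ?E (\<lambda>k y. - g k y))"
  proof (intro finite_measure_mono subsetI)
    fix \<omega> assume "\<omega> \<in> {\<omega>\<in>space M. ?t < \<bar>\<Sum>k\<in>I. X k \<omega> * g k (restrict (\<lambda>j. X j \<omega>) I)\<bar>}"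
    moreover have "(\<Sum>k\<in>I. X k \<omega> * - g k (restrict (\<lambda>j. X j \<omega>) I))
        = - (\<Sum>k\<in>I. X k \<omega> * g k (restrict (\<lambda>j. X j \<omega>) I))"
      by (simp add: sum_negf)
    ultimately show "\<omega> \<in> ?E g \<union> ?E (\<lambda>k y. - g k y)"
      by (auto simp: abs_if split: if_splits)
  qed (use E_pos E_neg in simp)
  also have "\<dots> \<le> prob (?E g) + prob (?E (\<lambda>k y. - g k y))"
    using E_pos E_neg by (rule measure_Un_le)
  also have "\<dots> \<le> exp (- l\<^sup>2 / 2) + exp (- l\<^sup>2 / 2)"
  proof (intro add_mono)
    show "prob (?E g) \<le> exp (- l\<^sup>2 / 2)"
      by (rule Azuma_ineq_ge[OF assms(1-7) u V l])
    show "prob (?E (\<lambda>k y. - g k y)) \<le> exp (- l\<^sup>2 / 2)"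
    proof (rule Azuma_ineq_ge[OF assms(1-4) _ neg_future _ u V l])
      show "\<bar>- g k y\<bar> \<le> b k" for k y
        using g_bound[of k y] by simp
      show "(\<lambda>y. - g k y) \<in> borel_measurable (PiM J (\<lambda>_. borel))" for k J
        using g[of k J] by measurable
    qed
  qed
  finally show ?thesis
    by simp
qed

section \<open>Deterministic analysis of recursive summation\<close>

lemma rsum_Suc: "1 \<le> m \<Longrightarrow> rsum xs ds (Suc m) = (rsum xs ds m + xs (Suc m)) * (1 + ds (Suc m))"
  by (cases m) auto

lemma rsum_error_expansion:
  assumes "1 \<le> m"
  shows "rsum xs ds m - (\<Sum>i=1..m. xs i)
           = (\<Sum>k\<in>{2..m}. (\<Sum>i=1..k. xs i) * ds k * (\<Prod>j\<in>{k<..m}. 1 + ds j))"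
  using assms
proof (induction m rule: dec_induct)
  case base
  then show ?case by simp
next
  case (step m)
  let ?s = "\<lambda>k. \<Sum>i=1..k. xs i"
  have tail: "(\<Prod>j\<in>{k<..Suc m}. 1 + ds j) = (\<Prod>j\<in>{k<..m}. 1 + ds j) * (1 + ds (Suc m))"
    if "k \<le> m" for k
  proof -
    have "{k<..Suc m} = insert (Suc m) {k<..m}"
      using that by auto
    then show ?thesis by (simp add: mult.commute)
  qed
  have "rsum xs ds (Suc m) - ?s (Suc m)
      = (rsum xs ds m - ?s m) * (1 + ds (Suc m)) + ?s (Suc m) * ds (Suc m)"
    using step.hyps(1) by (simp add: rsum_Suc algebra_simps)
  also have "\<dots> = (\<Sum>k\<in>{2..m}. ?s k * ds k * (\<Prod>j\<in>{k<..Suc m}. 1 + ds j)) + ?s (Suc m) * ds (Suc m)"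
    unfolding step.IH sum_distrib_right
    by (intro arg_cong2[where f = "(+)"] sum.cong) (simp_all add: tail mult.assoc)
  also have "\<dots> = (\<Sum>k\<in>{2..Suc m}. ?s k * ds k * (\<Prod>j\<in>{k<..Suc m}. 1 + ds j))"
  proof -
    have "{2..Suc m} = insert (Suc m) {2..m}"
      using step.hyps(1) by auto
    then show ?thesis by simp
  qed
  finally show ?case .
qed

lemma borel_measurable_rsum:
  assumes "\<And>i. i \<in> {1..n} \<Longrightarrow> x i \<in> borel_measurable M"
    and "\<And>k. k \<in> {2..n} \<Longrightarrow> d k \<in> borel_measurable M" and "m \<le> n"
  shows "(\<lambda>\<omega>. rsum (\<lambda>i. x i \<omega>) (\<lambda>k. d k \<omega>) m) \<in> borel_measurable M"
  using assms(3)
proof (induction m)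
  case (Suc m)
  show ?case
  proof (cases "m = 0")
    case True
    then show ?thesis using Suc.prems assms(1)[of 1] by simp
  next
    case False
    then show ?thesis
      using Suc assms(1,2)[of "Suc m"] by (simp add: rsum_Suc)
  qed
qed simp

lemma prod_one_plus_le_exp:
  fixes a :: "'i \<Rightarrow> real"
  assumes "\<And>j. j \<in> S \<Longrightarrow> -1 \<le> a j"
  shows "0 \<le> (\<Prod>j\<in>S. 1 + a j)" and "(\<Prod>j\<in>S. 1 + a j) \<le> exp (\<Sum>j\<in>S. a j)"
proof -
  have nonneg: "0 \<le> 1 + a j" if "j \<in> S" for j
    using assms[OF that] by linarith
  then show "0 \<le> (\<Prod>j\<in>S. 1 + a j)"
    by (rule prod_nonneg)
  show "(\<Prod>j\<in>S. 1 + a j) \<le> exp (\<Sum>j\<in>S. a j)"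
  proof (cases "finite S")
    case True
    have "(\<Prod>j\<in>S. 1 + a j) \<le> (\<Prod>j\<in>S. exp (a j))"
      using nonneg by (intro prod_mono) (simp add: add.commute exp_ge_add_one_self)
    then show ?thesis
      using True by (simp add: exp_sum)
  qed simp
qed

(* The truncation at G makes the coefficients in Azuma's inequality bounded; on the event where
   all suffix sums of the rounding errors are small it has no effect (trunc_tail_prod_eq_prod). *)
definition trunc_tail_prod :: "real \<Rightarrow> nat \<Rightarrow> nat \<Rightarrow> (nat \<Rightarrow> real) \<Rightarrow> real" where
  "trunc_tail_prod G n k y = max 0 (min G (\<Prod>j\<in>{k<..n}. 1 + y j))"

lemma trunc_tail_prod_abs_le: "0 \<le> G \<Longrightarrow> \<bar>trunc_tail_prod G n k y\<bar> \<le> G"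
  by (simp add: trunc_tail_prod_def)

lemma trunc_tail_prod_eq_prod:
  assumes "\<And>j. j \<in> {k<..n} \<Longrightarrow> -1 \<le> y j" and "exp (\<Sum>j\<in>{k<..n}. y j) \<le> G"
  shows "trunc_tail_prod G n k y = (\<Prod>j\<in>{k<..n}. 1 + y j)"
proof -
  have "0 \<le> (\<Prod>j\<in>{k<..n}. 1 + y j)" and "(\<Prod>j\<in>{k<..n}. 1 + y j) \<le> G"
    using prod_one_plus_le_exp[where S = "{k<..n}" and a = y, OF assms(1)] assms(2) by simp_all
  then show ?thesis
    by (simp add: trunc_tail_prod_def)
qed

lemma trunc_tail_prod_cong:
  "(\<And>j. j \<in> {k<..n} \<Longrightarrow> y j = y' j) \<Longrightarrow> trunc_tail_prod G n k y = trunc_tail_prod G n k y'"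
  unfolding trunc_tail_prod_def by (metis prod.cong)

lemma borel_measurable_trunc_tail_prod [measurable]:
  "trunc_tail_prod G n k \<in> borel_measurable (PiM J (\<lambda>_. borel))"
  unfolding trunc_tail_prod_def by measurable

lemma sqrt_sum_squares_le:
  fixes f :: "'i \<Rightarrow> real"
  assumes "\<And>k. k \<in> K \<Longrightarrow> \<bar>f k\<bar> \<le> W"
  shows "sqrt (\<Sum>k\<in>K. (f k)\<^sup>2) \<le> sqrt (card K) * W"
proof (cases "finite K \<and> K \<noteq> {}")
  case True
  then have W: "0 \<le> W"
    using assms by force
  have "(\<Sum>k\<in>K. (f k)\<^sup>2) \<le> (\<Sum>k\<in>K. W\<^sup>2)"
    using assms by (intro sum_mono) (metis abs_ge_zero power2_abs power_mono)
  then have "sqrt (\<Sum>k\<in>K. (f k)\<^sup>2) \<le> sqrt (card K * W\<^sup>2)"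
    by simp
  also have "\<dots> = sqrt (card K) * W"
    using W by (simp add: real_sqrt_mult)
  finally show ?thesis .
qed auto

lemma powr_three_halves:
  fixes x :: real
  assumes "0 \<le> x"
  shows "x powr (3/2) = x * sqrt x"
proof -
  have "x powr (3/2) = x powr (1 + 1/2)"
    by simp
  also have "\<dots> = x powr 1 * x powr (1/2)"
    by (rule powr_add)
  also have "\<dots> = x * sqrt x"
    using assms by (simp add: powr_half_sqrt)
  finally show ?thesis .
qed

lemma rsum_error_le:
  fixes xs ds :: "nat \<Rightarrow> real"
  assumes n: "1 \<le> n" and u: "0 \<le> u" "u < 1" and l: "0 \<le> l"
    and G: "exp (l * sqrt n * u) \<le> G"
    and ds: "\<And>k. k \<in> {2..n} \<Longrightarrow> \<bar>ds k\<bar> \<le> u"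
    and tails: "\<And>k. k \<in> {2..n} \<Longrightarrow> (\<Sum>j\<in>{k<..n}. ds j) < l * sqrt n * u"
    and partial: "\<And>k. k \<in> {1..n} \<Longrightarrow> \<bar>(\<Sum>i=1..k. xs i) - k * \<mu>\<bar> \<le> l * C * sqrt n"
    and rounding: "\<bar>\<Sum>k\<in>{2..n}. ds k * ((\<Sum>i=1..k. xs i) * trunc_tail_prod G n k ds)\<bar>
                     \<le> l * u * G * sqrt (\<Sum>k\<in>{2..n}. (\<Sum>i=1..k. xs i)\<^sup>2)"
  shows "\<bar>rsum xs ds n - (\<Sum>i=1..n. xs i)\<bar> \<le> G * (l * \<bar>\<mu>\<bar> * n powr (3/2) + l\<^sup>2 * C * n) * u"
proof -
  let ?s = "\<lambda>k. \<Sum>i=1..k. xs i"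
  define W where "W = n * \<bar>\<mu>\<bar> + l * C * sqrt n"
  have "0 \<le> l * C * sqrt n"
    using partial[of 1] n by (meson abs_ge_zero atLeastAtMost_iff order_trans order_refl)
  then have W: "0 \<le> W"
    by (simp add: W_def)
  have coeff: "0 \<le> l * u * G"
    using l u order_trans[OF exp_ge_zero G] by simp
  have trunc: "trunc_tail_prod G n k ds = (\<Prod>j\<in>{k<..n}. 1 + ds j)" if k: "k \<in> {2..n}" for k
  proof (rule trunc_tail_prod_eq_prod)
    show "-1 \<le> ds j" if "j \<in> {k<..n}" for j
      using ds[of j] that k u by (auto simp: abs_le_iff)
    show "exp (\<Sum>j\<in>{k<..n}. ds j) \<le> G"
      using tails[OF k] G by (meson exp_le_cancel_iff less_imp_le order_trans)
  qed
  have "rsum xs ds n - (\<Sum>i=1..n. xs i) = (\<Sum>k\<in>{2..n}. ds k * (?s k * trunc_tail_prod G n k ds))"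
    unfolding rsum_error_expansion[OF n] by (intro sum.cong) (simp_all add: trunc)
  then have "\<bar>rsum xs ds n - (\<Sum>i=1..n. xs i)\<bar> \<le> l * u * G * sqrt (\<Sum>k\<in>{2..n}. (?s k)\<^sup>2)"
    using rounding by simp
  also have "\<dots> \<le> l * u * G * (sqrt (card {2..n}) * W)"
  proof (intro mult_left_mono sqrt_sum_squares_le)
    fix k assume k: "k \<in> {2..n}"
    have "\<bar>?s k\<bar> \<le> \<bar>k * \<mu>\<bar> + l * C * sqrt n"
      using partial[of k] k abs_triangle_ineq[of "?s k - k * \<mu>" "k * \<mu>"] by simp
    also have "\<bar>k * \<mu>\<bar> \<le> n * \<bar>\<mu>\<bar>"
      using k by (simp add: abs_mult mult_right_mono)
    finally show "\<bar>?s k\<bar> \<le> W"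
      by (simp add: W_def)
  qed (fact coeff)
  also have "\<dots> \<le> l * u * G * (sqrt n * W)"
    using coeff W n by (intro mult_left_mono mult_right_mono) auto
  also have "\<dots> = G * (l * \<bar>\<mu>\<bar> * n powr (3/2) + l\<^sup>2 * C * n) * u"
    using powr_three_halves[of "real n"] by (simp add: W_def algebra_simps power2_eq_square)
  finally show ?thesis .
qed

section \<open>The probabilistic error bound\<close>

lemma (in prob_space) prob_tail_sum_ge:
  fixes d :: "nat \<Rightarrow> 'a \<Rightarrow> real"
  assumes ind: "indep_vars (\<lambda>_. borel) d {2..n}"
    and E: "\<And>k. k \<in> {2..n} \<Longrightarrow> expectation (d k) = 0"
    and bound: "\<And>k \<omega>. k \<in> {2..n} \<Longrightarrow> \<omega> \<in> space M \<Longrightarrow> \<bar>d k \<omega>\<bar> \<le> u"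
    and u: "0 < u" and l: "0 \<le> l"
  defines "B \<equiv> {\<omega>\<in>space M. \<exists>k\<in>{2..n}. l * sqrt n * u \<le> (\<Sum>j\<in>{k<..n}. d j \<omega>)}"
  shows "B \<in> events" and "prob B \<le> exp (- l\<^sup>2 / 2)"
proof -
  have d: "d k \<in> borel_measurable M" if "k \<in> {2..n}" for k
    using ind that by (simp add: indep_vars_def)
  have "(\<lambda>\<omega>. \<Sum>j\<in>{k<..n}. d j \<omega>) \<in> borel_measurable M" if "k \<in> {2..n}" for k
    using that by (intro borel_measurable_sum d) auto
  then show B: "B \<in> events"
    unfolding B_def by (intro sets.sets_Collect_finite_Ex) auto
  show "prob B \<le> exp (- l\<^sup>2 / 2)"
  proof (cases "n < 2")
    case True
    then have "B = {}" by (auto simp: B_def)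
    then show ?thesis by simp
  next
    case False
    let ?t = "l * sqrt n * u"
    let ?A = "{\<omega>\<in>space M. \<exists>k. ?t \<le> (\<Sum>j\<in>{j\<in>{2..n}. k \<le> j}. d j \<omega>)}"
    have V: "(\<Sum>i\<in>{2..n}. u\<^sup>2) = (real n - 1) * u\<^sup>2"
      using False by (simp add: of_nat_diff)
    have "prob B \<le> prob ?A"
    proof (rule finite_measure_mono)
      show "B \<subseteq> ?A"
      proof
        fix \<omega> assume "\<omega> \<in> B"
        then obtain k where "k \<in> {2..n}" "?t \<le> (\<Sum>j\<in>{k<..n}. d j \<omega>)" "\<omega> \<in> space M"
          by (auto simp: B_def)
        moreover have "{k<..n} = {j\<in>{2..n}. Suc k \<le> j}"
          using \<open>k \<in> {2..n}\<close> by auto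
        ultimately show "\<omega> \<in> ?A" by auto
      qed
      show "?A \<in> events"
        using d by (rule sets_Collect_Ex_upper_sum_ge)
    qed
    also have "\<dots> \<le> exp (- ?t\<^sup>2 / (2 * (\<Sum>i\<in>{2..n}. u\<^sup>2)))"
      using ind E bound l u False V by (intro Hoeffding_maximal_ineq) auto
    also have "\<dots> \<le> exp (- l\<^sup>2 / 2)"
    proof -
      have "l\<^sup>2 * (real n - 1) \<le> l\<^sup>2 * real n"
        by (simp add: mult_left_mono)
      then have "l\<^sup>2 / 2 \<le> ?t\<^sup>2 / (2 * ((real n - 1) * u\<^sup>2))"
        using False u by (simp add: power_mult_distrib field_simps)
      then show ?thesis
        unfolding V by simp
    qed
    finally show ?thesis .
  qed
qed

lemma (in prob_space) prob_prefix_sum_ge: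
  fixes Y :: "nat \<Rightarrow> 'a \<Rightarrow> real"
  assumes ind: "indep_vars (\<lambda>_. borel) Y {1..n}"
    and E: "\<And>i. i \<in> {1..n} \<Longrightarrow> expectation (Y i) = 0"
    and bound: "\<And>i \<omega>. i \<in> {1..n} \<Longrightarrow> \<omega> \<in> space M \<Longrightarrow> \<bar>Y i \<omega>\<bar> \<le> C"
    and C: "0 < C" and n: "0 < n" and l: "0 \<le> l"
  defines "B \<equiv> {\<omega>\<in>space M. \<exists>k\<in>{1..n}. l * C * sqrt n \<le> (\<Sum>i=1..k. Y i \<omega>)}"
  shows "B \<in> events" and "prob B \<le> exp (- l\<^sup>2 / 2)"
proof -
  let ?t = "l * C * sqrt n"
  let ?A = "{\<omega>\<in>space M. \<exists>k. ?t \<le> (\<Sum>j\<in>{j\<in>{1..n}. k \<le> n - j}. Y j \<omega>)}"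
  have Y: "Y i \<in> borel_measurable M" if "i \<in> {1..n}" for i
    using ind that by (simp add: indep_vars_def)
  have "(\<lambda>\<omega>. \<Sum>i=1..k. Y i \<omega>) \<in> borel_measurable M" if "k \<in> {1..n}" for k
    using that by (intro borel_measurable_sum Y) auto
  then show "B \<in> events"
    unfolding B_def by (intro sets.sets_Collect_finite_Ex) auto
  have "prob B \<le> prob ?A"
  proof (rule finite_measure_mono)
    show "B \<subseteq> ?A"
    proof
      fix \<omega> assume "\<omega> \<in> B"
      then obtain k where k: "k \<in> {1..n}" "\<omega> \<in> space M" "?t \<le> (\<Sum>i=1..k. Y i \<omega>)"
        by (auto simp: B_def)
      \<comment> \<open>with \<open>r j = n - j\<close> the upper sums of the maximal inequality are the prefix sums\<close>
      moreover have "{j\<in>{1..n}. n - k \<le> n - j} = {1..k}"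
        using k(1) by auto
      ultimately have "?t \<le> (\<Sum>j\<in>{j\<in>{1..n}. n - k \<le> n - j}. Y j \<omega>)"
        by simp
      with k(2) show "\<omega> \<in> ?A"
        by blast
    qed
    show "?A \<in> events"
      using Y by (rule sets_Collect_Ex_upper_sum_ge)
  qed
  also have "\<dots> \<le> exp (- ?t\<^sup>2 / (2 * (\<Sum>i\<in>{1..n}. C\<^sup>2)))"
    using ind E bound C n l by (intro Hoeffding_maximal_ineq) auto
  also have "- ?t\<^sup>2 / (2 * (\<Sum>i\<in>{1..n}. C\<^sup>2)) = - l\<^sup>2 / 2"
    using C n by (simp add: power_mult_distrib)
  finally show "prob B \<le> exp (- l\<^sup>2 / 2)" .
qed

lemma (in prob_space) prob_partial_sum_deviation_gt:
  fixes x :: "nat \<Rightarrow> 'a \<Rightarrow> real"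
  assumes ind: "indep_vars (\<lambda>_. borel) x {1..n}"
    and E: "\<And>i. i \<in> {1..n} \<Longrightarrow> expectation (x i) = \<mu>"
    and bound: "\<And>i \<omega>. i \<in> {1..n} \<Longrightarrow> \<omega> \<in> space M \<Longrightarrow> \<bar>x i \<omega> - \<mu>\<bar> \<le> C" and l: "0 \<le> l"
  defines "B \<equiv> {\<omega>\<in>space M. \<exists>k\<in>{1..n}. l * C * sqrt n < \<bar>(\<Sum>i=1..k. x i \<omega>) - k * \<mu>\<bar>}"
  shows "B \<in> events" and "prob B \<le> 2 * exp (- l\<^sup>2 / 2)"
proof -
  let ?P = "\<lambda>s. {\<omega>\<in>space M. \<exists>k\<in>{1..n}. l * C * sqrt n \<le> (\<Sum>i=1..k. s * (x i \<omega> - \<mu>))}"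
  have x: "x i \<in> borel_measurable M" if "i \<in> {1..n}" for i
    using ind that by (simp add: indep_vars_def)
  have dev: "(\<Sum>i=1..k. x i \<omega>) - k * \<mu> = (\<Sum>i=1..k. x i \<omega> - \<mu>)" for k \<omega>
    by (simp add: sum_subtractf)
  have "(\<lambda>\<omega>. (\<Sum>i=1..k. x i \<omega>) - k * \<mu>) \<in> borel_measurable M" if "k \<in> {1..n}" for k
    using that by (intro borel_measurable_diff borel_measurable_sum x) auto
  then show "B \<in> events"
    unfolding B_def by (intro sets.sets_Collect_finite_Ex) auto
  show "prob B \<le> 2 * exp (- l\<^sup>2 / 2)"
  proof (cases "0 < n \<and> 0 < C")
    case False
    have "\<not> l * C * sqrt n < \<bar>(\<Sum>i=1..k. x i \<omega>) - k * \<mu>\<bar>" if "k \<in> {1..n}" "\<omega> \<in> space M" for k \<omega>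
    proof -
      have "C = 0"
        using bound[of 1 \<omega>] that False by auto
      then have "x i \<omega> - \<mu> = 0" if "i \<in> {1..k}" for i
        using bound[of i \<omega>] \<open>k \<in> {1..n}\<close> \<open>\<omega> \<in> space M\<close> that by auto
      with \<open>C = 0\<close> show ?thesis
        unfolding dev by simp
    qed
    then have "B = {}"
      by (auto simp: B_def)
    then show ?thesis by simp
  next
    case True
    have P: "?P s \<in> events" "prob (?P s) \<le> exp (- l\<^sup>2 / 2)" if s: "\<bar>s\<bar> = 1" for s
    proof -
      have ind_s: "indep_vars (\<lambda>_. borel) (\<lambda>i \<omega>. s * (x i \<omega> - \<mu>)) {1..n}"
        using ind by (rule indep_vars_compose2[where Y = "\<lambda>_ z. s * (z - \<mu>)"]) simp
      have E_s: "expectation (\<lambda>\<omega>. s * (x i \<omega> - \<mu>)) = 0" if "i \<in> {1..n}" for i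
      proof -
        have "AE \<omega> in M. norm (x i \<omega>) \<le> \<bar>\<mu>\<bar> + C"
          using bound[OF that] by (intro AE_I2) (smt (verit) real_norm_def)
        then have "integrable M (x i)"
          using x[OF that] by (rule integrable_const_bound)
        then show ?thesis
          using E[OF that] by (simp add: prob_space)
      qed
      have bound_s: "\<bar>s * (x i \<omega> - \<mu>)\<bar> \<le> C" if "i \<in> {1..n}" "\<omega> \<in> space M" for i \<omega>
        using bound[OF that] s by (simp add: abs_mult)
      show "?P s \<in> events"
        using ind_s E_s bound_s conjunct2[OF True] conjunct1[OF True] l by (rule prob_prefix_sum_ge(1))
      show "prob (?P s) \<le> exp (- l\<^sup>2 / 2)"
        using ind_s E_s bound_s conjunct2[OF True] conjunct1[OF True] l by (rule prob_prefix_sum_ge(2))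
    qed
    have "prob B \<le> prob (?P 1 \<union> ?P (-1))"
    proof (rule finite_measure_mono)
      show "B \<subseteq> ?P 1 \<union> ?P (-1)"
      proof
        fix \<omega> assume "\<omega> \<in> B"
        then obtain k where k: "k \<in> {1..n}" "\<omega> \<in> space M" "l * C * sqrt n < \<bar>\<Sum>i=1..k. x i \<omega> - \<mu>\<bar>"
          unfolding B_def dev by auto
        then have "l * C * sqrt n \<le> (\<Sum>i=1..k. 1 * (x i \<omega> - \<mu>))
            \<or> l * C * sqrt n \<le> (\<Sum>i=1..k. -1 * (x i \<omega> - \<mu>))"
          by (simp add: sum_subtractf abs_if split: if_splits)
        then show "\<omega> \<in> ?P 1 \<union> ?P (-1)"
          using k(1,2) by blast
      qed
    qed (intro sets.Un P; simp)
    also have "\<dots> \<le> prob (?P 1) + prob (?P (-1))"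
      by (intro measure_Un_le P) simp_all
    also have "\<dots> \<le> exp (- l\<^sup>2 / 2) + exp (- l\<^sup>2 / 2)"
      by (intro add_mono P) simp_all
    finally show ?thesis by simp
  qed
qed

lemma (in prob_space) prob_rounding_term_gt:
  fixes x d :: "nat \<Rightarrow> 'a \<Rightarrow> real"
  assumes ind: "indep_vars (\<lambda>_. borel) d {2..n}"
    and E: "\<And>k. k \<in> {2..n} \<Longrightarrow> expectation (d k) = 0"
    and bound: "\<And>k \<omega>. k \<in> {2..n} \<Longrightarrow> \<omega> \<in> space M \<Longrightarrow> \<bar>d k \<omega>\<bar> \<le> u"
    and ind_dx: "indep_var (PiM {2..n} (\<lambda>_. borel)) (\<lambda>\<omega>. \<lambda>k\<in>{2..n}. d k \<omega>)
                           (PiM {1..n} (\<lambda>_. borel)) (\<lambda>\<omega>. \<lambda>i\<in>{1..n}. x i \<omega>)"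
    and u: "0 < u" and G: "0 \<le> G" and l: "0 \<le> l"
  defines "B \<equiv> {\<omega>\<in>space M. l * u * G * sqrt (\<Sum>k\<in>{2..n}. (\<Sum>i=1..k. x i \<omega>)\<^sup>2)
    < \<bar>\<Sum>k\<in>{2..n}. d k \<omega> * ((\<Sum>i=1..k. x i \<omega>) * trunc_tail_prod G n k (\<lambda>j. d j \<omega>))\<bar>}"
  shows "B \<in> events" and "prob B \<le> 2 * exp (- l\<^sup>2 / 2)"
proof -
  let ?S = "PiM {2..n} (\<lambda>_. borel) :: (nat \<Rightarrow> real) measure"
    and ?T = "PiM {1..n} (\<lambda>_. borel) :: (nat \<Rightarrow> real) measure"
  let ?D = "\<lambda>\<omega>. \<lambda>k\<in>{2..n}. d k \<omega>" and ?X = "\<lambda>\<omega>. \<lambda>i\<in>{1..n}. x i \<omega>"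
  define H where "H = {p\<in>space (?S \<Otimes>\<^sub>M ?T). l * u * G * sqrt (\<Sum>k\<in>{2..n}. (\<Sum>i=1..k. snd p i)\<^sup>2)
    < \<bar>\<Sum>k\<in>{2..n}. fst p k * ((\<Sum>i=1..k. snd p i) * trunc_tail_prod G n k (fst p))\<bar>}"
  have H: "H \<in> sets (?S \<Otimes>\<^sub>M ?T)"
    unfolding H_def by measurable
  have H_section: "{\<omega>\<in>space M. (?D \<omega>, b) \<in> H}
      = {\<omega>\<in>space M. l * u * sqrt (\<Sum>k\<in>{2..n}. (\<bar>\<Sum>i=1..k. b i\<bar> * G)\<^sup>2)
          < \<bar>\<Sum>k\<in>{2..n}. d k \<omega> * ((\<Sum>i=1..k. b i) * trunc_tail_prod G n k (?D \<omega>))\<bar>}"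
    if "b \<in> space ?T" for b
  proof -
    have "sqrt (\<Sum>k\<in>{2..n}. (\<bar>\<Sum>i=1..k. b i\<bar> * G)\<^sup>2) = G * sqrt (\<Sum>k\<in>{2..n}. (\<Sum>i=1..k. b i)\<^sup>2)"
      using G by (simp add: power_mult_distrib sum_distrib_left[symmetric] real_sqrt_mult mult.commute[of _ "G\<^sup>2"])
    moreover have "(\<Sum>k\<in>{2..n}. ?D \<omega> k * ((\<Sum>i=1..k. b i) * trunc_tail_prod G n k (?D \<omega>)))
        = (\<Sum>k\<in>{2..n}. d k \<omega> * ((\<Sum>i=1..k. b i) * trunc_tail_prod G n k (?D \<omega>)))" for \<omega>
      by (intro sum.cong) auto
    ultimately show ?thesis
      using that by (auto simp: H_def space_pair_measure space_PiM mult_ac simp del: restrict_apply)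
  qed
  have B_eq: "B = {\<omega>\<in>space M. (?D \<omega>, ?X \<omega>) \<in> H}"
  proof -
    have partial: "(\<Sum>i=1..k. ?X \<omega> i) = (\<Sum>i=1..k. x i \<omega>)" if "k \<in> {2..n}" for k \<omega>
      using that by (intro sum.cong) auto
    have "(\<Sum>k\<in>{2..n}. (\<Sum>i=1..k. ?X \<omega> i)\<^sup>2) = (\<Sum>k\<in>{2..n}. (\<Sum>i=1..k. x i \<omega>)\<^sup>2)"
      and "(\<Sum>k\<in>{2..n}. ?D \<omega> k * ((\<Sum>i=1..k. ?X \<omega> i) * trunc_tail_prod G n k (?D \<omega>)))
          = (\<Sum>k\<in>{2..n}. d k \<omega> * ((\<Sum>i=1..k. x i \<omega>) * trunc_tail_prod G n k (\<lambda>j. d j \<omega>)))" for \<omega>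
      using partial by (auto intro!: sum.cong trunc_tail_prod_cong)
    then show ?thesis
      by (auto simp: B_def H_def space_pair_measure space_PiM simp del: restrict_apply)
  qed
  show "B \<in> events"
    unfolding B_eq using ind_dx H by (rule indep_var_pair_event)
  have "emeasure M B \<le> ennreal (2 * exp (- l\<^sup>2 / 2))"
    unfolding B_eq using ind_dx H
  proof (rule emeasure_indep_var_le)
    fix b assume b: "b \<in> space ?T"
    have "prob {\<omega>\<in>space M. (?D \<omega>, b) \<in> H} \<le> 2 * exp (- l\<^sup>2 / 2)"
      unfolding H_section[OF b]
    proof (rule Azuma_ineq_abs[OF _ ind E bound _ _ _ u l])
      show "\<bar>(\<Sum>i=1..k. b i) * trunc_tail_prod G n k y\<bar> \<le> \<bar>\<Sum>i=1..k. b i\<bar> * G" for k y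
        using trunc_tail_prod_abs_le[OF G] by (simp add: abs_mult mult_left_mono)
      show "(\<Sum>i=1..k. b i) * trunc_tail_prod G n k y = (\<Sum>i=1..k. b i) * trunc_tail_prod G n k y'"
        if "\<And>j. k < j \<Longrightarrow> y j = y' j" for k y y'
        using that by (auto intro!: trunc_tail_prod_cong)
    qed auto
    then show "emeasure M {\<omega>\<in>space M. (?D \<omega>, b) \<in> H} \<le> ennreal (2 * exp (- l\<^sup>2 / 2))"
      by (simp add: emeasure_eq_measure)
  qed
  then show "prob B \<le> 2 * exp (- l\<^sup>2 / 2)"
    by (simp add: emeasure_eq_measure)
qed

lemma (in prob_space) prob_ge_one_minus_exceptional:
  assumes A: "{\<omega>\<in>space M. P \<omega>} \<in> events" "prob {\<omega>\<in>space M. P \<omega>} \<le> a"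
    and B: "{\<omega>\<in>space M. Q \<omega>} \<in> events" "prob {\<omega>\<in>space M. Q \<omega>} \<le> b"
    and C: "{\<omega>\<in>space M. R \<omega>} \<in> events" "prob {\<omega>\<in>space M. R \<omega>} \<le> c"
    and T: "{\<omega>\<in>space M. S \<omega>} \<in> events"
    and good: "\<And>\<omega>. \<omega> \<in> space M \<Longrightarrow> \<not> P \<omega> \<Longrightarrow> \<not> Q \<omega> \<Longrightarrow> \<not> R \<omega> \<Longrightarrow> S \<omega>"
  shows "1 - (a + b + c) \<le> prob {\<omega>\<in>space M. S \<omega>}"
proof -
  let ?A = "{\<omega>\<in>space M. P \<omega>}" and ?B = "{\<omega>\<in>space M. Q \<omega>}" and ?C = "{\<omega>\<in>space M. R \<omega>}"
  have "prob (?A \<union> ?B \<union> ?C) \<le> prob (?A \<union> ?B) + prob ?C"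
    using A B C by (intro measure_Un_le) auto
  moreover have "prob (?A \<union> ?B) \<le> prob ?A + prob ?B"
    using A B by (intro measure_Un_le) auto
  moreover have "prob (space M - (?A \<union> ?B \<union> ?C)) \<le> prob {\<omega>\<in>space M. S \<omega>}"
    using T good by (intro finite_measure_mono) auto
  moreover have "prob (space M - (?A \<union> ?B \<union> ?C)) = 1 - prob (?A \<union> ?B \<union> ?C)"
    using A B C by (intro prob_compl) auto
  ultimately show ?thesis
    using A B C by linarith
qed

lemma (in prob_space) prob_rsum_error_le:
  fixes x d :: "nat \<Rightarrow> 'a \<Rightarrow> real"
  assumes n: "1 \<le> n"
    and ind_x: "indep_vars (\<lambda>_. borel) x {1..n}"
    and E_x: "\<And>i. i \<in> {1..n} \<Longrightarrow> expectation (x i) = \<mu>"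
    and bound_x: "\<And>i \<omega>. i \<in> {1..n} \<Longrightarrow> \<omega> \<in> space M \<Longrightarrow> \<bar>x i \<omega> - \<mu>\<bar> \<le> C"
    and ind_d: "indep_vars (\<lambda>_. borel) d {2..n}"
    and E_d: "\<And>k. k \<in> {2..n} \<Longrightarrow> expectation (d k) = 0"
    and bound_d: "\<And>k \<omega>. k \<in> {2..n} \<Longrightarrow> \<omega> \<in> space M \<Longrightarrow> \<bar>d k \<omega>\<bar> \<le> u"
    and ind_dx: "indep_var (PiM {2..n} (\<lambda>_. borel)) (\<lambda>\<omega>. \<lambda>k\<in>{2..n}. d k \<omega>)
                           (PiM {1..n} (\<lambda>_. borel)) (\<lambda>\<omega>. \<lambda>i\<in>{1..n}. x i \<omega>)"
    and u: "0 < u" "u < 1" and l: "0 \<le> l" and G: "exp (l * sqrt n * u) \<le> G"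
  shows "1 - 5 * exp (- l\<^sup>2 / 2) \<le> prob {\<omega>\<in>space M.
           \<bar>rsum (\<lambda>i. x i \<omega>) (\<lambda>k. d k \<omega>) n - (\<Sum>i=1..n. x i \<omega>)\<bar>
             \<le> G * (l * \<bar>\<mu>\<bar> * n powr (3/2) + l\<^sup>2 * C * n) * u}"
proof -
  define B_d where "B_d = {\<omega>\<in>space M. \<exists>k\<in>{2..n}. l * sqrt n * u \<le> (\<Sum>j\<in>{k<..n}. d j \<omega>)}"
  define B_x where "B_x = {\<omega>\<in>space M. \<exists>k\<in>{1..n}. l * C * sqrt n < \<bar>(\<Sum>i=1..k. x i \<omega>) - k * \<mu>\<bar>}"
  define B_r where "B_r = {\<omega>\<in>space M. l * u * G * sqrt (\<Sum>k\<in>{2..n}. (\<Sum>i=1..k. x i \<omega>)\<^sup>2)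
    < \<bar>\<Sum>k\<in>{2..n}. d k \<omega> * ((\<Sum>i=1..k. x i \<omega>) * trunc_tail_prod G n k (\<lambda>j. d j \<omega>))\<bar>}"
  have B_d: "B_d \<in> events" "prob B_d \<le> exp (- l\<^sup>2 / 2)"
    unfolding B_d_def using prob_tail_sum_ge[OF ind_d E_d bound_d u(1) l] by blast+
  have B_x: "B_x \<in> events" "prob B_x \<le> 2 * exp (- l\<^sup>2 / 2)"
    unfolding B_x_def using prob_partial_sum_deviation_gt[OF ind_x E_x bound_x l] by blast+
  have B_r: "B_r \<in> events" "prob B_r \<le> 2 * exp (- l\<^sup>2 / 2)"
    unfolding B_r_def
    using prob_rounding_term_gt[OF ind_d E_d bound_d ind_dx u(1) order_trans[OF exp_ge_zero G] l] by blast+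
  have "1 - (exp (- l\<^sup>2 / 2) + 2 * exp (- l\<^sup>2 / 2) + 2 * exp (- l\<^sup>2 / 2)) \<le> prob {\<omega>\<in>space M.
           \<bar>rsum (\<lambda>i. x i \<omega>) (\<lambda>k. d k \<omega>) n - (\<Sum>i=1..n. x i \<omega>)\<bar>
             \<le> G * (l * \<bar>\<mu>\<bar> * n powr (3/2) + l\<^sup>2 * C * n) * u}"
    using B_d B_x B_r unfolding B_d_def B_x_def B_r_def
  proof (rule prob_ge_one_minus_exceptional)
    have "(\<lambda>\<omega>. rsum (\<lambda>i. x i \<omega>) (\<lambda>k. d k \<omega>) n) \<in> borel_measurable M"
      using ind_x ind_d by (intro borel_measurable_rsum[OF _ _ order_refl]) (auto simp: indep_vars_def)
    moreover have "(\<lambda>\<omega>. \<Sum>i=1..n. x i \<omega>) \<in> borel_measurable M"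
      using ind_x by (intro borel_measurable_sum) (auto simp: indep_vars_def)
    ultimately show "{\<omega>\<in>space M. \<bar>rsum (\<lambda>i. x i \<omega>) (\<lambda>k. d k \<omega>) n - (\<Sum>i=1..n. x i \<omega>)\<bar>
        \<le> G * (l * \<bar>\<mu>\<bar> * n powr (3/2) + l\<^sup>2 * C * n) * u} \<in> events"
      by measurable
  qed (intro rsum_error_le[OF n less_imp_le[OF u(1)] u(2) l G], auto simp: not_le not_less bound_d)
  then show ?thesis
    by simp
qed

lemma lam_nonneg: "0 < \<delta> \<Longrightarrow> \<delta> \<le> 2 \<Longrightarrow> 0 \<le> lam \<delta>"
  by (simp add: lam_def)

lemma exp_neg_lam_sq: "0 < \<delta> \<Longrightarrow> \<delta> \<le> 2 \<Longrightarrow> exp (- (lam \<delta>)\<^sup>2 / 2) = \<delta> / 2"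
  by (simp add: lam_def exp_minus)

lemma exp_le_one_plus_gamma_tilde:
  assumes "0 \<le> u" "u < 1" "0 \<le> lam \<delta>"
  shows "exp (lam \<delta> * sqrt n * u) \<le> 1 + gamma_tilde u n \<delta>"
proof -
  have "lam \<delta> * sqrt n * u \<le> lam \<delta> * sqrt n * u + n * u\<^sup>2"
    by simp
  also have "\<dots> \<le> (lam \<delta> * sqrt n * u + n * u\<^sup>2) / (1 - u)"
    using assms by (simp add: le_divide_eq mult_left_le)
  finally show ?thesis
    by (simp add: gamma_tilde_def)
qed

theorem theorem5p2:
  fixes M :: "'a measure" and x d :: "nat \<Rightarrow> 'a \<Rightarrow> real"
    and n :: nat and \<mu>x Cx u \<delta> :: real
  assumes "prob_space M"
    and "n \<ge> 1"
    and "\<And>i. i \<in> {1..n} \<Longrightarrow> x i \<in> borel_measurable M"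
    and "\<And>k. k \<in> {2..n} \<Longrightarrow> d k \<in> borel_measurable M"
    and "prob_space.indep_vars M (\<lambda>_. borel) x {1..n}"
    and "\<And>i. i \<in> {1..n} \<Longrightarrow> prob_space.expectation M (x i) = \<mu>x"
    and "\<And>i \<omega>. i \<in> {1..n} \<Longrightarrow> \<omega> \<in> space M \<Longrightarrow> \<bar>x i \<omega> - \<mu>x\<bar> \<le> Cx"
    and "prob_space.indep_vars M (\<lambda>_. borel) d {2..n}"
    and "\<And>k. k \<in> {2..n} \<Longrightarrow> prob_space.expectation M (d k) = 0"
    and "\<And>k \<omega>. k \<in> {2..n} \<Longrightarrow> \<omega> \<in> space M \<Longrightarrow> \<bar>d k \<omega>\<bar> \<le> u"
    and "0 < u" and "u < 1"
    and "prob_space.indep_var M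
           (PiM {2..n} (\<lambda>_. borel)) (\<lambda>\<omega>. \<lambda>k\<in>{2..n}. d k \<omega>)
           (PiM {1..n} (\<lambda>_. borel)) (\<lambda>\<omega>. \<lambda>i\<in>{1..n}. x i \<omega>)"
    and "0 < \<delta>" and "\<delta> < 1"
  shows "measure M {\<omega> \<in> space M.
           \<bar>rsum (\<lambda>i. x i \<omega>) (\<lambda>k. d k \<omega>) n - (\<Sum>i=1..n. x i \<omega>)\<bar>
             \<le> (1 + gamma_tilde u n (\<delta> / 3))
                * (lam (\<delta> / 3) * \<bar>\<mu>x\<bar> * real n powr (3/2)
                   + (lam (\<delta> / 3))^2 * Cx * real n) * u} \<ge> 1 - \<delta>"
proof -
  interpret prob_space M by fact
  define l where "l = lam (\<delta> / 3)"
  define G where "G = 1 + gamma_tilde u n (\<delta> / 3)"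
  have l: "0 \<le> l"
    using assms(14,15) by (simp add: l_def lam_nonneg)
  have tail: "exp (- l\<^sup>2 / 2) = \<delta> / 6"
    using exp_neg_lam_sq[of "\<delta> / 3"] assms(14,15) by (simp add: l_def)
  have G: "exp (l * sqrt n * u) \<le> G"
    using assms(11,12) l by (simp add: G_def l_def exp_le_one_plus_gamma_tilde)
  have "1 - 5 * exp (- l\<^sup>2 / 2) \<le> measure M {\<omega>\<in>space M.
           \<bar>rsum (\<lambda>i. x i \<omega>) (\<lambda>k. d k \<omega>) n - (\<Sum>i=1..n. x i \<omega>)\<bar>
             \<le> G * (l * \<bar>\<mu>x\<bar> * n powr (3/2) + l\<^sup>2 * Cx * n) * u}"
    by (rule prob_rsum_error_le[OF assms(2,5-10,13,11,12) l G])
  then show ?thesis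
    using assms(14) unfolding tail by (simp add: G_def l_def)
qed

end
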